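(* Let $G$ be a finite simple graph with no isolated edges and maximum degree $\Delta$. Let $G'$ be the multigraph obtained from $G$ by contracting every edge $uv$ of $G$ such that $\deg(u)<\Delta/3$, $\deg(v)<\Delta/3$, and neither $u$ nor $v$ has any neighbor other than each other of degree less than $\Delta/3$ (contracting means deleting $uv$ and identifying $u$ and $v$ into one vertex). Then $G'$ is a loopless multigraph with edge multiplicity at most $2$, $\Delta(G')=\Delta$, and the subgraph $H$ of $G'$ induced by the vertices of degree less than $\Delta/3$ in $G'$ has no isolated edges. Moreover, for every positive integer $p$, if $G'$ has an avd-coloring using at most $p$ colors, then so does $G$.
   Context: For a (partial) edge coloring $c$ and a vertex $v$, $S_c(v)$ denotes the set of colors on the colored edges incident to $v$. An avd-coloring of a (multi)graph is a proper edge coloring $c$ (edges sharing an endpoint, including parallel edges, get distinct colors) such that $S_c(u)\neq S_c(v)$ for all adjacent vertices $u,v$. *)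

theory Defs
  imports Main Complex_Main
begin

text \<open>A (multi)graph is given by a vertex set VV, an edge set EE of edge identifiers,
  and an endpoint map ends (ends e is the set of endpoints of e; a loop has one endpoint).
  A simple graph (V, E) is the multigraph (V, E, id) with every edge a 2-subset of V.\<close>

definition simple_graph :: "'a set \<Rightarrow> 'a set set \<Rightarrow> bool" where
  "simple_graph V E \<longleftrightarrow> finite V \<and>
     (\<forall>e\<in>E. \<exists>u v. u \<noteq> v \<and> e = {u, v} \<and> u \<in> V \<and> v \<in> V)"

text \<open>Degree in a multigraph; a loop contributes 2.\<close>
definition mdeg :: "'e set \<Rightarrow> ('e \<Rightarrow> 'v set) \<Rightarrow> 'v \<Rightarrow> nat" where
  "mdeg EE ends v = card {e\<in>EE. v \<in> ends e} + card {e\<in>EE. ends e = {v}}"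

definition maxdeg :: "'v set \<Rightarrow> 'e set \<Rightarrow> ('e \<Rightarrow> 'v set) \<Rightarrow> nat" where
  "maxdeg VV EE ends = (if VV = {} then 0 else Max (mdeg EE ends ` VV))"

definition madj :: "'e set \<Rightarrow> ('e \<Rightarrow> 'v set) \<Rightarrow> 'v \<Rightarrow> 'v \<Rightarrow> bool" where
  "madj EE ends u v \<longleftrightarrow> u \<noteq> v \<and> (\<exists>e\<in>EE. ends e = {u, v})"

definition no_isolated_edges :: "'e set \<Rightarrow> ('e \<Rightarrow> 'v set) \<Rightarrow> bool" where
  "no_isolated_edges EE ends \<longleftrightarrow>
     \<not> (\<exists>e\<in>EE. \<exists>u v. u \<noteq> v \<and> ends e = {u, v} \<and> mdeg EE ends u = 1 \<and> mdeg EE ends v = 1)"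

definition loopless :: "'e set \<Rightarrow> ('e \<Rightarrow> 'v set) \<Rightarrow> bool" where
  "loopless EE ends \<longleftrightarrow> (\<forall>e\<in>EE. card (ends e) = 2)"

definition multiplicity :: "'e set \<Rightarrow> ('e \<Rightarrow> 'v set) \<Rightarrow> 'v \<Rightarrow> 'v \<Rightarrow> nat" where
  "multiplicity EE ends u v = card {e\<in>EE. ends e = {u, v}}"

definition Sc :: "'e set \<Rightarrow> ('e \<Rightarrow> 'v set) \<Rightarrow> ('e \<Rightarrow> 'c) \<Rightarrow> 'v \<Rightarrow> 'c set" where
  "Sc EE ends c v = c ` {e\<in>EE. v \<in> ends e}"

definition avd_coloring :: "'e set \<Rightarrow> ('e \<Rightarrow> 'v set) \<Rightarrow> ('e \<Rightarrow> 'c) \<Rightarrow> bool" where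
  "avd_coloring EE ends c \<longleftrightarrow>
     (\<forall>e\<in>EE. \<forall>f\<in>EE. e \<noteq> f \<and> ends e \<inter> ends f \<noteq> {} \<longrightarrow> c e \<noteq> c f) \<and>
     (\<forall>u v. madj EE ends u v \<longrightarrow> Sc EE ends c u \<noteq> Sc EE ends c v)"

definition low :: "'a set \<Rightarrow> 'a set set \<Rightarrow> 'a \<Rightarrow> bool" where
  "low V E v \<longleftrightarrow> real (mdeg E id v) < real (maxdeg V E id) / 3"

definition contract_edges :: "'a set \<Rightarrow> 'a set set \<Rightarrow> 'a set set" where
  "contract_edges V E = {e\<in>E. \<exists>u v. u \<noteq> v \<and> e = {u, v} \<and> low V E u \<and> low V E v \<and>
      (\<forall>w. {u, w} \<in> E \<and> w \<noteq> v \<longrightarrow> \<not> low V E w) \<and>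
      (\<forall>w. {v, w} \<in> E \<and> w \<noteq> u \<longrightarrow> \<not> low V E w)}"

text \<open>Vertex of G' containing v: the class of v under identification along contracted edges.\<close>
definition cls :: "'a set \<Rightarrow> 'a set set \<Rightarrow> 'a \<Rightarrow> 'a set" where
  "cls V E v = {w. (v, w) \<in> {(x, y). {x, y} \<in> contract_edges V E}\<^sup>*}"

definition contr_V :: "'a set \<Rightarrow> 'a set set \<Rightarrow> 'a set set" where
  "contr_V V E = cls V E ` V"

definition contr_E :: "'a set \<Rightarrow> 'a set set \<Rightarrow> 'a set set" where
  "contr_E V E = E - contract_edges V E"

definition contr_ends :: "'a set \<Rightarrow> 'a set set \<Rightarrow> 'a set \<Rightarrow> 'a set set" where
  "contr_ends V E e = cls V E ` e"

end

theory Submission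
  imports Defs
begin

text \<open>The contracted edges form a matching: if uv is contracted, then u and v are each
  other's only low neighbours. So a vertex of G' is either a vertex of G or a contracted pair uv;
  the pair has degree at most deg u + deg v < 2\<Delta>/3, and all its other neighbours are high.
  Hence a vertex of degree \<Delta> is never merged, two merged vertices are never adjacent (so
  parallel edges only join a vertex to a pair), and an edge of H joins two unmerged low vertices,
  one of which has a further low neighbour because the edge was not contracted; that neighbour
  gives a second edge of H.

  An avd-colouring of G' is lifted to G by keeping the colours of the surviving edges and giving
  each contracted edge uv a colour of the palette (which has at least \<Delta> colours, those at a
  vertex of maximum degree) that is missing from the fewer than 2\<Delta>/3 edges around uv. Adjacent
  vertices of G are then distinguished as in G', or by their degrees (a low merged vertex and its
  high neighbour), or, for a contracted edge uv, because the edges at u and at v all meet at the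
  merged vertex of G': equal colour sets would force uv to be an isolated edge.\<close>

definition proper_edge_coloring :: "'e set \<Rightarrow> ('e \<Rightarrow> 'v set) \<Rightarrow> ('e \<Rightarrow> 'c) \<Rightarrow> bool" where
  "proper_edge_coloring EE ends c \<longleftrightarrow>
     (\<forall>e\<in>EE. \<forall>f\<in>EE. e \<noteq> f \<and> ends e \<inter> ends f \<noteq> {} \<longrightarrow> c e \<noteq> c f)"

lemma avd_coloring_iff:
  "avd_coloring EE ends c \<longleftrightarrow> proper_edge_coloring EE ends c \<and>
     (\<forall>u v. madj EE ends u v \<longrightarrow> Sc EE ends c u \<noteq> Sc EE ends c v)"
  by (simp add: avd_coloring_def proper_edge_coloring_def)

lemma proper_edge_coloring_inj_on_incident:
  assumes "proper_edge_coloring EE ends c"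
  shows "inj_on c {e\<in>EE. v \<in> ends e}"
  using assms by (auto simp: proper_edge_coloring_def intro!: inj_onI)

lemma card_Sc_proper:
  assumes "proper_edge_coloring EE ends c"
  shows "card (Sc EE ends c v) = card {e\<in>EE. v \<in> ends e}"
  unfolding Sc_def by (rule card_image[OF proper_edge_coloring_inj_on_incident[OF assms]])

lemma mdeg_loopless:
  assumes "loopless EE ends"
  shows "mdeg EE ends v = card {e\<in>EE. v \<in> ends e}"
proof -
  have "{e\<in>EE. ends e = {v}} = {}"
    using assms by (auto simp: loopless_def)
  then show ?thesis
    unfolding mdeg_def by (metis card.empty add_0_right)
qed

lemma simple_graph_edgeE:
  assumes "simple_graph V E" "e \<in> E"
  obtains u v where "u \<noteq> v" "e = {u, v}" "u \<in> V" "v \<in> V"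
  using assms by (auto simp: simple_graph_def)

lemma simple_graph_finite_edges: "simple_graph V E \<Longrightarrow> finite E"
  by (rule finite_subset[of _ "Pow V"]) (auto simp: simple_graph_def)

lemma simple_graph_loopless: "simple_graph V E \<Longrightarrow> loopless E id"
  by (auto simp: loopless_def elim: simple_graph_edgeE)

locale contraction =
  fixes V :: "'a set" and E :: "'a set set"
  assumes simple: "simple_graph V E"
    and no_isolated: "no_isolated_edges E id"
begin

abbreviation \<Delta> :: nat where "\<Delta> \<equiv> maxdeg V E id"
abbreviation deg :: "'a \<Rightarrow> nat" where "deg \<equiv> mdeg E id"
abbreviation CE :: "'a set set" where "CE \<equiv> contract_edges V E"
abbreviation cl :: "'a \<Rightarrow> 'a set" where "cl \<equiv> cls V E"
abbreviation E' :: "'a set set" where "E' \<equiv> contr_E V E"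
abbreviation ends' :: "'a set \<Rightarrow> 'a set set" where "ends' \<equiv> contr_ends V E"

definition matched :: "'a \<Rightarrow> bool" where
  "matched x \<longleftrightarrow> (\<exists>y. {x, y} \<in> CE)"

lemma finite_V: "finite V"
  using simple by (simp add: simple_graph_def)

lemma finite_E: "finite E"
  using simple by (rule simple_graph_finite_edges)

lemma edge_distinct: "{x, y} \<in> E \<Longrightarrow> x \<noteq> y"
  using simple by (auto elim!: simple_graph_edgeE simp: doubleton_eq_iff)

lemma deg_eq_card: "deg x = card {e\<in>E. x \<in> e}"
  using mdeg_loopless[OF simple_graph_loopless[OF simple]] by simp

lemma deg_le_maxdeg: "x \<in> V \<Longrightarrow> deg x \<le> \<Delta>"
  using finite_V by (auto simp: maxdeg_def)

lemma maxdeg_attained: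
  assumes "V \<noteq> {}"
  obtains x where "x \<in> V" "deg x = \<Delta>"
proof -
  have "Max (deg ` V) \<in> deg ` V"
    using finite_V assms by simp
  then obtain x where "x \<in> V" "deg x = Max (deg ` V)"
    by auto
  with assms that show thesis
    by (simp add: maxdeg_def)
qed

lemma contracted_subset: "CE \<subseteq> E"
  by (auto simp: contract_edges_def)

lemma contracted_edgeD:
  assumes "{a, b} \<in> CE"
  shows "{a, b} \<in> E" "low V E a" "low V E b" "\<And>w. {a, w} \<in> E \<Longrightarrow> w \<noteq> b \<Longrightarrow> \<not> low V E w"
proof -
  from assms obtain u v where uv: "{a, b} = {u, v}" "{a, b} \<in> E" "low V E u" "low V E v"
      "\<forall>w. {u, w} \<in> E \<and> w \<noteq> v \<longrightarrow> \<not> low V E w"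
      "\<forall>w. {v, w} \<in> E \<and> w \<noteq> u \<longrightarrow> \<not> low V E w"
    unfolding contract_edges_def by blast
  from uv(1) have "(a = u \<and> b = v) \<or> (a = v \<and> b = u)"
    by (auto simp: doubleton_eq_iff)
  with uv show "{a, b} \<in> E" "low V E a" "low V E b"
      "\<And>w. {a, w} \<in> E \<Longrightarrow> w \<noteq> b \<Longrightarrow> \<not> low V E w"
    by auto
qed

lemma contracted_partner_unique: "{a, b} \<in> CE \<Longrightarrow> {a, c} \<in> CE \<Longrightarrow> b = c"
  by (metis contracted_edgeD)

lemma contracted_edges_disjoint:
  assumes "e \<in> CE" "f \<in> CE" "x \<in> e" "x \<in> f"
  shows "e = f"
proof -
  have "\<exists>y. e = {x, y}" if "e \<in> CE" "x \<in> e" for e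
    using that contracted_subset simple by (auto elim!: simple_graph_edgeE simp: insert_commute)
  with assms show ?thesis
    using contracted_partner_unique by metis
qed

lemma matched_low: "matched x \<Longrightarrow> low V E x"
  using contracted_edgeD(2) by (auto simp: matched_def)

lemma matched_neighbour_not_low:
  assumes "{a, b} \<in> E" "{a, b} \<notin> CE" "matched a"
  shows "\<not> low V E b"
proof -
  from \<open>matched a\<close> obtain a' where "{a, a'} \<in> CE"
    by (auto simp: matched_def)
  moreover have "b \<noteq> a'"
    using assms calculation by auto
  ultimately show ?thesis
    using contracted_edgeD(4) assms(1) by blast
qed

lemma maximum_degree_unmatched:
  assumes "deg x = \<Delta>"
  shows "\<not> matched x"
  using matched_low[of x] assms by (auto simp: low_def)

lemma contracted_rtrancl:
  assumes "(a, z) \<in> {(x, y). {x, y} \<in> CE}\<^sup>*"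
  shows "z = a \<or> {a, z} \<in> CE"
  using assms
proof (induction rule: rtrancl_induct)
  case base
  then show ?case by simp
next
  case (step y z)
  then have "{y, z} \<in> CE"
    by simp
  with step.IH show ?case
    by (metis contracted_partner_unique insert_commute)
qed

lemma cls_self: "x \<in> cl x"
  by (simp add: cls_def)

lemma cls_contracted:
  assumes "{a, b} \<in> CE"
  shows "cl a = {a, b}"
proof
  show "cl a \<subseteq> {a, b}"
    using contracted_rtrancl contracted_partner_unique[OF assms] by (auto simp: cls_def)
  show "{a, b} \<subseteq> cl a"
    using assms by (auto simp: cls_def)
qed

lemma cls_unmatched: "\<not> matched a \<Longrightarrow> cl a = {a}"
  using contracted_rtrancl by (auto simp: cls_def matched_def)

lemma cls_eqD: "cl a = cl b \<Longrightarrow> a = b \<or> {a, b} \<in> CE"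
  using contracted_rtrancl[of a b] cls_self[of b] by (auto simp: cls_def)

lemma finite_cls: "finite (cl a)"
  by (cases "matched a") (auto simp: cls_unmatched matched_def dest!: cls_contracted)

lemma card_cls_le: "card (cl a) \<le> 2"
  by (cases "matched a") (auto simp: cls_unmatched matched_def card_insert_if dest!: cls_contracted)

lemma contr_E_eq: "E' = E - CE"
  by (simp add: contr_E_def)

lemma contr_edgeE:
  assumes "e \<in> E'"
  obtains a b where "e = {a, b}" "{a, b} \<in> E" "{a, b} \<notin> CE" "cl a \<noteq> cl b"
proof -
  from assms have e: "e \<in> E" "e \<notin> CE"
    by (simp_all add: contr_E_eq)
  then obtain a b where "a \<noteq> b" "e = {a, b}"
    using simple_graph_edgeE[OF simple] by metis
  moreover have "cl a \<noteq> cl b"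
    using cls_eqD calculation e(2) by blast
  ultimately show thesis
    using that e by blast
qed

lemma loopless_contr: "loopless E' ends'"
  unfolding loopless_def
proof
  fix e
  assume "e \<in> E'"
  then obtain a b where "e = {a, b}" "cl a \<noteq> cl b"
    by (rule contr_edgeE)
  then show "card (ends' e) = 2"
    by (simp add: contr_ends_def)
qed

lemma mdeg_contr: "mdeg E' ends' X = card {e\<in>E'. X \<in> cl ` e}"
  using mdeg_loopless[OF loopless_contr] by (simp add: contr_ends_def)

lemma incident_contr_unmatched:
  assumes "\<not> matched x"
  shows "{e\<in>E'. cl x \<in> cl ` e} = {e\<in>E. x \<in> e}"
proof (intro equalityI subsetI)
  fix e
  assume e: "e \<in> {e\<in>E'. cl x \<in> cl ` e}"
  then obtain w where "w \<in> e" "cl x = cl w"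
    by auto
  with assms e show "e \<in> {e\<in>E. x \<in> e}"
    using cls_eqD contr_E_eq by (auto simp: matched_def)
next
  fix e
  assume e: "e \<in> {e\<in>E. x \<in> e}"
  then obtain u v where "e = {u, v}"
    using simple by (auto elim: simple_graph_edgeE)
  with e have "\<exists>y. e = {x, y}"
    by (auto simp: insert_commute)
  with assms have "e \<notin> CE"
    by (auto simp: matched_def)
  with e show "e \<in> {e\<in>E'. cl x \<in> cl ` e}"
    using contr_E_eq by auto
qed

lemma incident_contr_contracted:
  assumes "{x, y} \<in> CE"
  shows "{e\<in>E'. cl x \<in> cl ` e} \<subseteq> {e\<in>E. x \<in> e} \<union> {e\<in>E. y \<in> e}"
  using cls_contracted[OF assms] cls_self contr_E_eq by fastforce

lemma incident_contracted:
  assumes "{x, y} \<in> CE"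
  shows "{e\<in>E. x \<in> e} = insert {x, y} {f\<in>E'. x \<in> f}"
  using assms contracted_edges_disjoint[OF _ assms] contracted_subset contr_E_eq by auto

lemma mdeg_contr_unmatched: "\<not> matched x \<Longrightarrow> mdeg E' ends' (cl x) = deg x"
  using incident_contr_unmatched mdeg_contr deg_eq_card by simp

lemma mdeg_contr_contracted:
  assumes "{x, y} \<in> CE"
  shows "mdeg E' ends' (cl x) \<le> deg x + deg y"
proof -
  have "mdeg E' ends' (cl x) \<le> card ({e\<in>E. x \<in> e} \<union> {e\<in>E. y \<in> e})"
    unfolding mdeg_contr by (rule card_mono) (use finite_E incident_contr_contracted[OF assms] in auto)
  also have "\<dots> \<le> deg x + deg y"
    unfolding deg_eq_card by (rule card_Un_le)
  finally show ?thesis .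
qed

lemma mdeg_contr_le_maxdeg:
  assumes "x \<in> V"
  shows "mdeg E' ends' (cl x) \<le> \<Delta>"
proof (cases "matched x")
  case True
  then obtain y where y: "{x, y} \<in> CE"
    by (auto simp: matched_def)
  then have "real (deg x) < real \<Delta> / 3" "real (deg y) < real \<Delta> / 3"
    using contracted_edgeD(2,3) by (auto simp: low_def)
  then have "deg x + deg y \<le> \<Delta>"
    by linarith
  then show ?thesis
    using mdeg_contr_contracted[OF y] by simp
next
  case False
  then show ?thesis
    using mdeg_contr_unmatched deg_le_maxdeg assms by simp
qed

lemma maxdeg_contr: "maxdeg (contr_V V E) E' ends' = \<Delta>"
proof (cases "V = {}")
  case True
  then show ?thesis
    by (simp add: maxdeg_def contr_V_def)
next
  case False
  then obtain x where x: "x \<in> V" "deg x = \<Delta>"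
    by (rule maxdeg_attained)
  then have "mdeg E' ends' (cl x) = \<Delta>"
    using mdeg_contr_unmatched maximum_degree_unmatched by simp
  with x(1) have "\<Delta> \<in> mdeg E' ends' ` cl ` V"
    by (metis image_eqI)
  then have "Max (mdeg E' ends' ` cl ` V) = \<Delta>"
    using finite_V mdeg_contr_le_maxdeg by (intro Max_eqI) auto
  with False show ?thesis
    by (simp add: maxdeg_def contr_V_def)
qed

lemma contr_edge_to_unmatched:
  assumes "\<not> matched b" "e \<in> E'" "cl ` e = {cl a, cl b}"
  shows "\<exists>z\<in>cl a. e = {z, b}"
proof -
  from assms(2) obtain u v where uv: "e = {u, v}" "{u, v} \<in> E" "{u, v} \<notin> CE" "cl u \<noteq> cl v"
    by (rule contr_edgeE)
  moreover have "cl b = {b}"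
    using cls_unmatched assms(1) by simp
  ultimately have eq: "{cl u, cl v} = {cl a, {b}}"
    using assms(3) by simp
  show ?thesis
  proof (cases "cl v = {b}")
    case True
    with eq uv(4) have "cl u = cl a"
      by (auto simp: doubleton_eq_iff)
    moreover from True have "v = b"
      using cls_self[of v] by simp
    ultimately show ?thesis
      using uv(1) cls_self[of u] by auto
  next
    case False
    with eq have "cl u = {b}" "cl v = cl a"
      by (auto simp: doubleton_eq_iff)
    then have "u = b" "v \<in> cl a"
      using cls_self[of u] cls_self[of v] by auto
    then show ?thesis
      using uv(1) by (auto simp: insert_commute)
  qed
qed

lemma multiplicity_contr_unmatched:
  assumes "\<not> matched b"
  shows "card {e\<in>E'. cl ` e = {cl a, cl b}} \<le> 2"
proof -
  have "{e\<in>E'. cl ` e = {cl a, cl b}} \<subseteq> (\<lambda>z. {z, b}) ` cl a"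
    using contr_edge_to_unmatched[OF assms] by (auto simp: image_iff)
  then have "card {e\<in>E'. cl ` e = {cl a, cl b}} \<le> card ((\<lambda>z. {z, b}) ` cl a)"
    by (rule card_mono[rotated]) (simp add: finite_cls)
  also have "\<dots> \<le> card (cl a)"
    by (rule card_image_le) (simp add: finite_cls)
  also have "\<dots> \<le> 2"
    by (rule card_cls_le)
  finally show ?thesis .
qed

lemma multiplicity_contr_le_2: "multiplicity E' ends' X Y \<le> 2"
proof (cases "\<exists>e\<in>E'. cl ` e = {X, Y}")
  case False
  then have "{e\<in>E'. cl ` e = {X, Y}} = {}"
    by blast
  then show ?thesis
    unfolding multiplicity_def contr_ends_def by (metis card.empty zero_le)
next
  case True
  then obtain e where e: "e \<in> E'" "cl ` e = {X, Y}"
    by blast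
  from e(1) obtain a b where ab: "e = {a, b}" "{a, b} \<in> E" "{a, b} \<notin> CE" "cl a \<noteq> cl b"
    by (rule contr_edgeE)
  have "\<not> matched a \<or> \<not> matched b"
    using matched_neighbour_not_low[OF ab(2,3)] matched_low by blast
  then have "card {e\<in>E'. cl ` e = {cl a, cl b}} \<le> 2"
    using multiplicity_contr_unmatched[of a b] multiplicity_contr_unmatched[of b a]
    by (auto simp: insert_commute)
  moreover have "{X, Y} = {cl a, cl b}"
    using e(2) ab(1) by simp
  ultimately show ?thesis
    by (simp add: multiplicity_def contr_ends_def)
qed

lemma uncontracted_low_edge_has_low_neighbour:
  assumes "{x, y} \<in> E" "{x, y} \<notin> CE" "low V E x" "low V E y"
  obtains w where "{x, w} \<in> E" "w \<noteq> y" "low V E w"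
    | w where "{y, w} \<in> E" "w \<noteq> x" "low V E w"
  using assms edge_distinct unfolding contract_edges_def by blast

abbreviation H :: "'a set set" where
  "H \<equiv> {e\<in>E'. \<forall>X\<in>ends' e. real (mdeg E' ends' X) < real \<Delta> / 3}"

lemma H_edge_low:
  assumes "e \<in> H" "x \<in> e"
  shows "low V E x"
proof (cases "matched x")
  case True
  then show ?thesis
    by (rule matched_low)
next
  case False
  moreover have "real (mdeg E' ends' (cl x)) < real \<Delta> / 3"
    using assms by (auto simp: contr_ends_def)
  ultimately show ?thesis
    using mdeg_contr_unmatched by (simp add: low_def)
qed

lemma H_edge_unmatched:
  assumes "{x, y} \<in> H"
  shows "\<not> matched x"
  using assms matched_neighbour_not_low H_edge_low contr_E_eq by blast

lemma H_edgeI: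
  assumes "\<not> matched x" "low V E x" "{x, w} \<in> E" "low V E w"
  shows "{x, w} \<in> H"
proof -
  have "{x, w} \<notin> CE"
    using assms(1) by (auto simp: matched_def)
  moreover have "\<not> matched w"
    using matched_neighbour_not_low[of w x] assms calculation by (auto simp: insert_commute)
  ultimately show ?thesis
    using assms mdeg_contr_unmatched contr_E_eq by (auto simp: contr_ends_def low_def)
qed

lemma mdeg_H_ge_2:
  assumes "{x, y} \<in> H" "{x, w} \<in> E" "w \<noteq> y" "low V E w"
  shows "2 \<le> mdeg H ends' (cl x)"
proof -
  have "{x, w} \<in> H"
    using H_edgeI H_edge_unmatched H_edge_low assms by blast
  moreover have "{x, y} \<noteq> {x, w}"
    using assms(2,3) edge_distinct by (auto simp: doubleton_eq_iff)
  ultimately have "card {{x, y}, {x, w}} \<le> card {e\<in>H. cl x \<in> ends' e}"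
    using assms(1) finite_E by (intro card_mono) (auto simp: contr_ends_def contr_E_eq)
  with \<open>{x, y} \<noteq> {x, w}\<close> show ?thesis
    by (simp add: mdeg_def)
qed

lemma H_no_isolated_edges: "no_isolated_edges H ends'"
  unfolding no_isolated_edges_def
proof (rule notI, elim bexE exE conjE)
  fix e U W
  assume e: "e \<in> H" "ends' e = {U, W}" "mdeg H ends' U = 1" "mdeg H ends' W = 1"
  then have "e \<in> E'"
    by simp
  then obtain x y where xy: "e = {x, y}" "{x, y} \<in> E" "{x, y} \<notin> CE" "cl x \<noteq> cl y"
    by (rule contr_edgeE)
  have "{U, W} = {cl x, cl y}"
    using e(2) xy(1) by (simp add: contr_ends_def)
  with e(3,4) have deg1: "mdeg H ends' (cl x) = 1" "mdeg H ends' (cl y) = 1"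
    by (auto simp: doubleton_eq_iff)
  have H: "{x, y} \<in> H" "{y, x} \<in> H"
    using e(1) xy(1) by (simp_all add: insert_commute)
  have "low V E x" "low V E y"
    using H_edge_low e(1) xy(1) by auto
  with xy(2,3) show False
  proof (cases rule: uncontracted_low_edge_has_low_neighbour)
    case (1 w)
    with H(1) have "2 \<le> mdeg H ends' (cl x)"
      by (rule mdeg_H_ge_2)
    with deg1(1) show False
      by simp
  next
    case (2 w)
    with H(2) have "2 \<le> mdeg H ends' (cl y)"
      by (rule mdeg_H_ge_2)
    with deg1(2) show False
      by simp
  qed
qed

end

locale contraction_coloring = contraction +
  fixes c :: "'a set \<Rightarrow> 'c"
  assumes avd: "avd_coloring E' ends' c"
begin

definition palette :: "'c set" where "palette = c ` E'"
definition around :: "'a set \<Rightarrow> 'a set set" where "around e = {f\<in>E'. f \<inter> e \<noteq> {}}"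
definition fresh :: "'a set \<Rightarrow> 'c" where "fresh e = (SOME a. a \<in> palette \<and> a \<notin> c ` around e)"
definition lifted :: "'a set \<Rightarrow> 'c" where "lifted e = (if e \<in> CE then fresh e else c e)"

lemma finite_palette: "finite palette"
  using finite_E contr_E_eq by (simp add: palette_def)

lemma colours_distinct_at:
  assumes "e \<in> E'" "f \<in> E'" "e \<noteq> f" "X \<in> cl ` e" "X \<in> cl ` f"
  shows "c e \<noteq> c f"
proof -
  have "ends' e \<inter> ends' f \<noteq> {}"
    using assms(4,5) by (auto simp: contr_ends_def)
  with avd assms(1-3) show ?thesis
    unfolding avd_coloring_def by blast
qed

lemma maxdeg_le_card_palette: "\<Delta> \<le> card palette"
proof (cases "V = {}")
  case True
  then show ?thesis
    by (simp add: maxdeg_def)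
next
  case False
  then obtain w where w: "w \<in> V" "deg w = \<Delta>"
    by (rule maxdeg_attained)
  then have sub: "{e\<in>E. w \<in> e} = {e\<in>E'. cl w \<in> cl ` e}"
    using incident_contr_unmatched maximum_degree_unmatched by simp
  have "inj_on c {e\<in>E. w \<in> e}"
    unfolding sub by (rule inj_onI) (use colours_distinct_at in blast)
  then have "\<Delta> = card (c ` {e\<in>E. w \<in> e})"
    using card_image w(2) deg_eq_card by metis
  also have "\<dots> \<le> card palette"
    unfolding palette_def sub by (rule card_mono) (use finite_E contr_E_eq in auto)
  finally show ?thesis .
qed

lemma card_around_contracted:
  assumes "{u, v} \<in> CE"
  shows "card (around {u, v}) < \<Delta>"
proof -
  have "around {u, v} \<subseteq> {e\<in>E. u \<in> e} \<union> {e\<in>E. v \<in> e}"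
    by (auto simp: around_def contr_E_eq)
  then have "card (around {u, v}) \<le> card ({e\<in>E. u \<in> e} \<union> {e\<in>E. v \<in> e})"
    by (rule card_mono[rotated]) (simp add: finite_E)
  also have "\<dots> \<le> deg u + deg v"
    unfolding deg_eq_card by (rule card_Un_le)
  finally show ?thesis
    using contracted_edgeD(2,3)[OF assms] by (simp add: low_def)
qed

lemma fresh_colour:
  assumes "e \<in> CE"
  shows "fresh e \<in> palette" "fresh e \<notin> c ` around e"
proof -
  obtain u v where uv: "e = {u, v}"
    using assms contracted_subset simple_graph_edgeE[OF simple] by blast
  have fin: "finite (around e)"
    by (simp add: around_def finite_E contr_E_eq)
  have "card (c ` around e) < card palette"
    using card_image_le[OF fin, of c] card_around_contracted assms maxdeg_le_card_palette uv
    by fastforce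
  then have "\<not> palette \<subseteq> c ` around e"
    using card_mono[OF finite_imageI[OF fin]] leD by blast
  then have "\<exists>a. a \<in> palette \<and> a \<notin> c ` around e"
    by blast
  then have "fresh e \<in> palette \<and> fresh e \<notin> c ` around e"
    unfolding fresh_def by (rule someI_ex)
  then show "fresh e \<in> palette" "fresh e \<notin> c ` around e"
    by simp_all
qed

lemma lifted_contr: "f \<in> E' \<Longrightarrow> lifted f = c f"
  by (simp add: lifted_def contr_E_eq)

lemma lifted_range: "lifted ` E \<subseteq> palette"
  using fresh_colour(1) by (auto simp: lifted_def palette_def contr_E_eq)

lemma proper_lifted: "proper_edge_coloring E id lifted"
  unfolding proper_edge_coloring_def
proof (intro ballI impI, elim conjE)
  fix e f
  assume ef: "e \<in> E" "f \<in> E" "e \<noteq> f" "id e \<inter> id f \<noteq> {}"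
  then obtain x where x: "x \<in> e" "x \<in> f"
    by auto
  consider "e \<in> CE" "f \<in> CE" | "e \<in> CE" "f \<in> E'" | "e \<in> E'" "f \<in> CE" | "e \<in> E'" "f \<in> E'"
    using ef contr_E_eq by auto
  then show "lifted e \<noteq> lifted f"
  proof cases
    case 1
    then show ?thesis
      using contracted_edges_disjoint ef x by blast
  next
    case 2
    then have "f \<in> around e"
      using x by (auto simp: around_def)
    with 2 show ?thesis
      using fresh_colour(2) lifted_contr by (force simp: lifted_def)
  next
    case 3
    then have "e \<in> around f"
      using x by (auto simp: around_def)
    with 3 show ?thesis
      using fresh_colour(2) lifted_contr by (force simp: lifted_def)
  next
    case 4
    then show ?thesis
      using colours_distinct_at[of e f "cl x"] ef x lifted_contr by auto
  qed
qed

lemma card_Sc_lifted: "card (Sc E id lifted x) = deg x"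
  using card_Sc_proper[OF proper_lifted] deg_eq_card by simp

lemma Sc_lifted_unmatched:
  assumes "\<not> matched x"
  shows "Sc E id lifted x = Sc E' ends' c (cl x)"
proof -
  have "Sc E id lifted x = lifted ` {e\<in>E'. cl x \<in> cl ` e}"
    using incident_contr_unmatched[OF assms] by (simp add: Sc_def)
  also have "\<dots> = c ` {e\<in>E'. cl x \<in> cl ` e}"
    using lifted_contr by (intro image_cong) auto
  finally show ?thesis
    by (simp add: Sc_def contr_ends_def)
qed

lemma Sc_lifted_contracted:
  assumes "{x, y} \<in> CE"
  shows "Sc E id lifted x = insert (fresh {x, y}) (c ` {f\<in>E'. x \<in> f})"
proof -
  have "Sc E id lifted x = insert (lifted {x, y}) (lifted ` {f\<in>E'. x \<in> f})"
    using incident_contracted[OF assms] by (simp add: Sc_def)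
  also have "lifted ` {f\<in>E'. x \<in> f} = c ` {f\<in>E'. x \<in> f}"
    using lifted_contr by (intro image_cong) auto
  also have "lifted {x, y} = fresh {x, y}"
    using assms by (simp add: lifted_def)
  finally show ?thesis .
qed

lemma contracted_colour_sets_disjoint:
  assumes "{x, y} \<in> CE"
  shows "c ` {f\<in>E'. x \<in> f} \<inter> c ` {f\<in>E'. y \<in> f} = {}"
proof -
  have "c f \<noteq> c g" if f: "f \<in> E'" "x \<in> f" and g: "g \<in> E'" "y \<in> g" for f g
  proof (cases "f = g")
    case True
    from f(1) obtain u v where "f = {u, v}"
      using contr_edgeE by metis
    moreover have "x \<noteq> y"
      using contracted_edgeD(1)[OF assms] edge_distinct by blast
    ultimately have "f = {x, y}"
      using f(2) g(2) True by auto
    with f(1) assms show ?thesis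
      by (simp add: contr_E_eq)
  next
    case False
    have "cl x = cl y"
      using cls_contracted[OF assms] cls_contracted[of y x] assms by (simp add: insert_commute)
    then show ?thesis
      using colours_distinct_at[OF f(1) g(1) False, of "cl x"] f(2) g(2) by auto
  qed
  then show ?thesis
    by blast
qed

lemma lifted_distinguishes_contracted:
  assumes "{x, y} \<in> CE"
  shows "Sc E id lifted x \<noteq> Sc E id lifted y"
proof
  assume eq: "Sc E id lifted x = Sc E id lifted y"
  have yx: "{y, x} \<in> CE"
    using assms by (simp add: insert_commute)
  let ?A = "c ` {f\<in>E'. x \<in> f}" and ?B = "c ` {f\<in>E'. y \<in> f}"
  have fresh: "fresh {x, y} \<notin> ?A" "fresh {x, y} \<notin> ?B"
    using fresh_colour(2)[OF assms] by (auto simp: around_def)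
  have "insert (fresh {x, y}) ?A = insert (fresh {x, y}) ?B"
    using eq Sc_lifted_contracted[OF assms] Sc_lifted_contracted[OF yx] by (simp add: insert_commute)
  then have "?A = ?B"
    using insert_ident[OF fresh] by blast
  with contracted_colour_sets_disjoint[OF assms] have "?A = {}" "?B = {}"
    by auto
  then have "{e\<in>E. x \<in> e} = {{x, y}}" "{e\<in>E. y \<in> e} = {{y, x}}"
    using incident_contracted[OF assms] incident_contracted[OF yx] by (simp_all only: image_is_empty)
  then have "deg x = 1" "deg y = 1"
    using deg_eq_card by simp_all
  moreover have "{x, y} \<in> E" "x \<noteq> y"
    using contracted_edgeD(1)[OF assms] edge_distinct by auto
  ultimately show False
    using no_isolated unfolding no_isolated_edges_def by (metis id_apply)
qed

lemma lifted_distinguishes_matched: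
  assumes "{x, y} \<in> E" "{x, y} \<notin> CE" "matched x"
  shows "Sc E id lifted x \<noteq> Sc E id lifted y"
proof
  assume "Sc E id lifted x = Sc E id lifted y"
  then have "deg x = deg y"
    using card_Sc_lifted by metis
  moreover have "low V E x" "\<not> low V E y"
    using matched_low matched_neighbour_not_low assms by auto
  ultimately show False
    by (simp add: low_def)
qed

lemma avd_coloring_lifted: "avd_coloring E id lifted"
  unfolding avd_coloring_iff
proof (intro conjI allI impI proper_lifted)
  fix x y
  assume "madj E id x y"
  then have xy: "{x, y} \<in> E" "x \<noteq> y"
    by (auto simp: madj_def)
  then have yx: "{y, x} \<in> E"
    by (simp add: insert_commute)
  consider "{x, y} \<in> CE" | "{x, y} \<notin> CE" "matched x" | "{x, y} \<notin> CE" "matched y"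
    | "{x, y} \<notin> CE" "\<not> matched x" "\<not> matched y"
    by blast
  then show "Sc E id lifted x \<noteq> Sc E id lifted y"
  proof cases
    case 1
    then show ?thesis
      by (rule lifted_distinguishes_contracted)
  next
    case 2
    then show ?thesis
      using lifted_distinguishes_matched xy by blast
  next
    case 3
    then show ?thesis
      using lifted_distinguishes_matched[OF yx] by (metis insert_commute)
  next
    case 4
    then have "{x, y} \<in> E'" "cl x \<noteq> cl y"
      using xy cls_unmatched contr_E_eq by auto
    then have "madj E' ends' (cl x) (cl y)"
      by (force simp: madj_def contr_ends_def)
    with 4 show ?thesis
      using avd Sc_lifted_unmatched by (simp add: avd_coloring_def)
  qed
qed

lemma card_lifted_le: "card (lifted ` E) \<le> card (c ` E')"
  using card_mono[OF finite_palette lifted_range] by (simp add: palette_def)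

end

theorem mainTheorem2:
  fixes V :: "'a set" and E :: "'a set set"
  assumes "simple_graph V E"
    and "no_isolated_edges E id"
  defines "\<Delta> \<equiv> maxdeg V E id"
    and "V' \<equiv> contr_V V E" and "E' \<equiv> contr_E V E" and "ends' \<equiv> contr_ends V E"
  shows "loopless E' ends'
    \<and> (\<forall>x y. x \<noteq> y \<longrightarrow> multiplicity E' ends' x y \<le> 2)
    \<and> maxdeg V' E' ends' = \<Delta>
    \<and> no_isolated_edges {e\<in>E'. \<forall>x\<in>ends' e. real (mdeg E' ends' x) < real \<Delta> / 3} ends'
    \<and> (\<forall>p::nat. p > 0 \<longrightarrow>
         (\<exists>c :: 'a set \<Rightarrow> nat. avd_coloring E' ends' c \<and> card (c ` E') \<le> p) \<longrightarrow>
         (\<exists>c :: 'a set \<Rightarrow> nat. avd_coloring E id c \<and> card (c ` E) \<le> p))"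
proof -
  interpret contraction V E
    using assms(1,2) by unfold_locales
  have "\<exists>c' :: 'a set \<Rightarrow> nat. avd_coloring E id c' \<and> card (c' ` E) \<le> p"
    if "avd_coloring E' ends' c" "card (c ` E') \<le> p" for p and c :: "'a set \<Rightarrow> nat"
  proof -
    interpret contraction_coloring V E c
      using that(1) unfolding E'_def ends'_def by unfold_locales
    show ?thesis
      using avd_coloring_lifted card_lifted_le that(2) unfolding E'_def by (intro exI[of _ lifted]) auto
  qed
  then show ?thesis
    unfolding \<Delta>_def V'_def E'_def ends'_def
    using loopless_contr multiplicity_contr_le_2 maxdeg_contr H_no_isolated_edges by blast
qed

end
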